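(* Let $(M,g)$ be a 4-dimensional Lorentzian (CQR)$_4$ manifold with fundamental vector $A$, and at a point where $C_{jklm}\neq0$ and $A\ne 0$ let $\lambda$ be the scalar with $A^iR_{im}=\lambda A_m$. Then $$A^mA^jR_{jklm}=\Big(\lambda-\frac{R}{6}\Big)A_kA_l,$$ and consequently $A_pR_{kjlm}A^mA^j-A_kR_{pjlm}A^mA^j=0$.
   Context: $(M,g)$ is a connected Hausdorff Lorentzian manifold with Levi-Civita connection $\nabla$; indices raised/lowered with $g$, repeated indices summed. $R_{jklm}$ is the Riemann tensor, $R_{kl}=-R_{mkl}{}^m$, $R=R^m{}_m$, and the Weyl tensor (with $n=4$) is $$C_{jklm}=R_{jklm}+\tfrac{1}{n-2}\big(g_{mj}R_{kl}-g_{mk}R_{jl}+R_{mj}g_{kl}-R_{mk}g_{jl}\big)-\tfrac{R}{(n-1)(n-2)}\big(g_{mj}g_{kl}-g_{mk}g_{jl}\big).$$ (CQR)$_n$: $C_{jklm}\not\equiv 0$ and there is a non-zero vector field $A_i$ (fundamental vector) with $$\nabla_i C_{jklm}=2A_iC_{jklm}+A_jC_{iklm}+A_kC_{jilm}+A_lC_{jkim}+A_mC_{jkli}.$$ (For such manifolds $A$ is null, $A^mC_{jklm}=0$, and $A$ is an eigenvector of the Ricci tensor wherever $C\neq0$.) *)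

theory Defs
  imports "HOL-Analysis.Analysis"
begin

text \<open>Local-coordinate model of a 4-dimensional Lorentzian manifold: an open connected
  set U of R^4 (points of type real^4), with coordinate indices of the finite type 4.
  Tensor fields are given by their components in these coordinates (all indices down).\<close>

type_synonym pt = "real^4"
type_synonym idx = 4

definition pd :: "idx \<Rightarrow> (pt \<Rightarrow> real) \<Rightarrow> pt \<Rightarrow> real" where
  "pd i f p = frechet_derivative f (at p) (axis i 1)"

fun pds :: "idx list \<Rightarrow> (pt \<Rightarrow> real) \<Rightarrow> pt \<Rightarrow> real" where
  "pds [] f = f"
| "pds (i # is) f = pd i (pds is f)"

definition smooth_fun_on :: "pt set \<Rightarrow> (pt \<Rightarrow> real) \<Rightarrow> bool" where
  "smooth_fun_on U f \<longleftrightarrow> (\<forall>is. pds is f differentiable_on U)"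

definition gmat :: "(pt \<Rightarrow> idx \<Rightarrow> idx \<Rightarrow> real) \<Rightarrow> pt \<Rightarrow> real^4^4" where
  "gmat g p = (\<chi> i j. g p i j)"

text \<open>Lorentzian signature (-,+,+,+), via Sylvester's law: symmetric and congruent to diag(-1,1,1,1).\<close>
definition lorentzian_matrix :: "real^4^4 \<Rightarrow> bool" where
  "lorentzian_matrix G \<longleftrightarrow> transpose G = G \<and>
     (\<exists>P::real^4^4. invertible P \<and>
        transpose P ** G ** P = (\<chi> i j. if i = j then (if i = 0 then -1 else 1) else 0))"

definition lorentzian_metric_on :: "pt set \<Rightarrow> (pt \<Rightarrow> idx \<Rightarrow> idx \<Rightarrow> real) \<Rightarrow> bool" where
  "lorentzian_metric_on U g \<longleftrightarrow>
     (\<forall>i j. smooth_fun_on U (\<lambda>p. g p i j)) \<and> (\<forall>p\<in>U. lorentzian_matrix (gmat g p))"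

definition ginv :: "(pt \<Rightarrow> idx \<Rightarrow> idx \<Rightarrow> real) \<Rightarrow> pt \<Rightarrow> idx \<Rightarrow> idx \<Rightarrow> real" where
  "ginv g p i j = matrix_inv (gmat g p) $ i $ j"

definition christoffel :: "(pt \<Rightarrow> idx \<Rightarrow> idx \<Rightarrow> real) \<Rightarrow> pt \<Rightarrow> idx \<Rightarrow> idx \<Rightarrow> idx \<Rightarrow> real" where
  "christoffel g p k i j = (1/2) * (\<Sum>l\<in>UNIV. ginv g p k l *
      (pd i (\<lambda>q. g q j l) p + pd j (\<lambda>q. g q i l) p - pd l (\<lambda>q. g q i j) p))"

text \<open>Curvature endomorphism components Rup a b c d = (R(d_c,d_d) d_b)^a,
  with R(X,Y) = nabla_X nabla_Y - nabla_Y nabla_X - nabla_[X,Y].\<close>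
definition Rup :: "(pt \<Rightarrow> idx \<Rightarrow> idx \<Rightarrow> real) \<Rightarrow> pt \<Rightarrow> idx \<Rightarrow> idx \<Rightarrow> idx \<Rightarrow> idx \<Rightarrow> real" where
  "Rup g p a b c d =
     pd c (\<lambda>q. christoffel g q a d b) p - pd d (\<lambda>q. christoffel g q a c b) p
     + (\<Sum>e\<in>UNIV. christoffel g p a c e * christoffel g p e d b
                 - christoffel g p a d e * christoffel g p e c b)"

text \<open>Riemann tensor R_{jklm} = g(R(d_j,d_k) d_m, d_l), so that R_{kl} = - R_{mkl}^m is the Ricci tensor.\<close>
definition Riem :: "(pt \<Rightarrow> idx \<Rightarrow> idx \<Rightarrow> real) \<Rightarrow> pt \<Rightarrow> idx \<Rightarrow> idx \<Rightarrow> idx \<Rightarrow> idx \<Rightarrow> real" where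
  "Riem g p j k l m = (\<Sum>a\<in>UNIV. g p l a * Rup g p a m j k)"

definition Ric :: "(pt \<Rightarrow> idx \<Rightarrow> idx \<Rightarrow> real) \<Rightarrow> pt \<Rightarrow> idx \<Rightarrow> idx \<Rightarrow> real" where
  "Ric g p k l = - (\<Sum>m\<in>UNIV. \<Sum>q\<in>UNIV. ginv g p m q * Riem g p m k l q)"

definition scal :: "(pt \<Rightarrow> idx \<Rightarrow> idx \<Rightarrow> real) \<Rightarrow> pt \<Rightarrow> real" where
  "scal g p = (\<Sum>k\<in>UNIV. \<Sum>l\<in>UNIV. ginv g p k l * Ric g p k l)"

definition Weyl :: "(pt \<Rightarrow> idx \<Rightarrow> idx \<Rightarrow> real) \<Rightarrow> pt \<Rightarrow> idx \<Rightarrow> idx \<Rightarrow> idx \<Rightarrow> idx \<Rightarrow> real" where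
  "Weyl g p j k l m = Riem g p j k l m
     + (1 / (4 - 2)) * (g p m j * Ric g p k l - g p m k * Ric g p j l
                        + Ric g p m j * g p k l - Ric g p m k * g p j l)
     - scal g p / ((4 - 1) * (4 - 2)) * (g p m j * g p k l - g p m k * g p j l)"

definition cov4 :: "(pt \<Rightarrow> idx \<Rightarrow> idx \<Rightarrow> real) \<Rightarrow> (pt \<Rightarrow> idx \<Rightarrow> idx \<Rightarrow> idx \<Rightarrow> idx \<Rightarrow> real)
      \<Rightarrow> pt \<Rightarrow> idx \<Rightarrow> idx \<Rightarrow> idx \<Rightarrow> idx \<Rightarrow> idx \<Rightarrow> real" where
  "cov4 g T p i j k l m = pd i (\<lambda>q. T q j k l m) p
     - (\<Sum>a\<in>UNIV. christoffel g p a i j * T p a k l m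
                 + christoffel g p a i k * T p j a l m
                 + christoffel g p a i l * T p j k a m
                 + christoffel g p a i m * T p j k l a)"

definition CQR4 :: "pt set \<Rightarrow> (pt \<Rightarrow> idx \<Rightarrow> idx \<Rightarrow> real) \<Rightarrow> (pt \<Rightarrow> idx \<Rightarrow> real) \<Rightarrow> bool" where
  "CQR4 U g A \<longleftrightarrow>
     (\<exists>p\<in>U. \<exists>j k l m. Weyl g p j k l m \<noteq> 0) \<and>
     (\<exists>p\<in>U. \<exists>i. A p i \<noteq> 0) \<and>
     (\<forall>p\<in>U. \<forall>i j k l m. cov4 g (Weyl g) p i j k l m =
        2 * A p i * Weyl g p j k l m + A p j * Weyl g p i k l m + A p k * Weyl g p j i l m
        + A p l * Weyl g p j k i m + A p m * Weyl g p j k l i)"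

definition raise :: "(pt \<Rightarrow> idx \<Rightarrow> idx \<Rightarrow> real) \<Rightarrow> (pt \<Rightarrow> idx \<Rightarrow> real) \<Rightarrow> pt \<Rightarrow> idx \<Rightarrow> real" where
  "raise g A p i = (\<Sum>j\<in>UNIV. ginv g p i j * A p j)"

end

theory Submission
  imports Defs
begin

(* The identity is pointwise linear algebra at p; of the (CQR)_4 data only A^m C_{jklm} = 0,
   A_m A^m = 0 and A^i R_{im} = lam A_m enter. Contracting the decomposition of the Weyl tensor
   with A^m A^j kills the left side, the terms with g_{mj} A^m A^j or R_{mj} A^m A^j vanish by
   nullity, and the remaining Ricci and metric terms contribute lam A_k A_l and (R/6) A_k A_l.
   The second identity follows since, by antisymmetry of R in its first pair, both of its
   contracted terms are multiples of A_k A_l. *)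

lemma lorentzian_matrix_invertible:
  assumes "lorentzian_matrix G"
  shows "invertible G"
proof -
  let ?D = "(\<chi> i j. if i = j then (if i = 0 then -1 else 1) else 0) :: real^4^4"
  obtain P :: "real^4^4" where "transpose P ** G ** P = ?D"
    using assms unfolding lorentzian_matrix_def by blast
  moreover have "det ?D = (\<Prod>i\<in>UNIV. ?D $ i $ i)"
    by (rule det_diagonal) simp
  moreover have "(\<Prod>i\<in>UNIV. ?D $ i $ i) \<noteq> 0"
    by (simp add: prod_zero_iff)
  ultimately have "det (transpose P ** G ** P) \<noteq> 0"
    by simp
  then have "det G \<noteq> 0"
    by (simp add: det_mul)
  then show ?thesis
    by (simp add: invertible_det_nz)
qed

lemma matrix_mul_matrix_inv:
  fixes G :: "'a::semiring_1^'n^'n"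
  assumes "invertible G"
  shows "G ** matrix_inv G = mat 1"
  using assms unfolding invertible_def matrix_inv_def by (rule someI_ex[THEN conjunct1])

lemma raise_lower:
  assumes inv: "invertible (gmat g p)" and sym: "transpose (gmat g p) = gmat g p"
  shows "(\<Sum>m\<in>UNIV. raise g A p m * g p m k) = A p k"
proof -
  have g_sym: "g p m k = g p k m" for m
    using sym unfolding gmat_def transpose_def by (metis (no_types, lifting) vec_lambda_beta vec_eq_iff)
  have delta: "(\<Sum>m\<in>UNIV. g p k m * ginv g p m j) = (if k = j then 1 else 0)" for j
    using matrix_mul_matrix_inv[OF inv, THEN arg_cong, of "\<lambda>M. M $ k $ j"]
    by (simp add: ginv_def gmat_def matrix_matrix_mult_def mat_def)
  have "(\<Sum>m\<in>UNIV. raise g A p m * g p m k) = (\<Sum>m\<in>UNIV. g p k m * raise g A p m)"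
    by (intro sum.cong refl) (simp add: g_sym)
  also have "\<dots> = (\<Sum>j\<in>UNIV. (\<Sum>m\<in>UNIV. g p k m * ginv g p m j) * A p j)"
    unfolding raise_def sum_distrib_left sum_distrib_right by (subst sum.swap) (simp add: mult_ac)
  also have "\<dots> = A p k"
    by (simp add: delta if_distrib[of "\<lambda>x. x * A p _"] cong: if_cong)
  finally show ?thesis .
qed

lemma Riem_antisym:
  "Riem g p k j l m = - Riem g p j k l m"
  unfolding Riem_def Rup_def
  by (simp add: sum_negf[symmetric] sum_subtractf algebra_simps)

lemma double_contraction_scalar:
  fixes a :: "'i::finite \<Rightarrow> 'a::comm_semiring_1" and X :: "'i \<Rightarrow> 'i \<Rightarrow> 'a"
  shows "(\<Sum>m\<in>UNIV. \<Sum>j\<in>UNIV. a m * a j * (X m j * c)) = (\<Sum>j\<in>UNIV. a j * (\<Sum>m\<in>UNIV. a m * X m j)) * c"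
  by (subst sum.swap) (simp add: sum_distrib_left sum_distrib_right mult_ac)

lemma double_contraction_product:
  fixes a :: "'i::finite \<Rightarrow> 'a::comm_semiring_1" and X Y :: "'i \<Rightarrow> 'k \<Rightarrow> 'a"
  shows "(\<Sum>m\<in>UNIV. \<Sum>j\<in>UNIV. a m * a j * (X m k * Y j l)) = (\<Sum>m\<in>UNIV. a m * X m k) * (\<Sum>j\<in>UNIV. a j * Y j l)"
  by (simp add: sum_product mult_ac)

lemma Weyl_double_contraction:
  "(\<Sum>m\<in>UNIV. \<Sum>j\<in>UNIV. a m * a j * Weyl g p j k l m)
   = (\<Sum>m\<in>UNIV. \<Sum>j\<in>UNIV. a m * a j * Riem g p j k l m)
     + 1/2 * ((\<Sum>m\<in>UNIV. \<Sum>j\<in>UNIV. a m * a j * (g p m j * Ric g p k l))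
      - (\<Sum>m\<in>UNIV. \<Sum>j\<in>UNIV. a m * a j * (g p m k * Ric g p j l))
      + (\<Sum>m\<in>UNIV. \<Sum>j\<in>UNIV. a m * a j * (Ric g p m j * g p k l))
      - (\<Sum>m\<in>UNIV. \<Sum>j\<in>UNIV. a m * a j * (Ric g p m k * g p j l)))
     - scal g p / 6 * ((\<Sum>m\<in>UNIV. \<Sum>j\<in>UNIV. a m * a j * (g p m j * g p k l))
                     - (\<Sum>m\<in>UNIV. \<Sum>j\<in>UNIV. a m * a j * (g p m k * g p j l)))"
  unfolding Weyl_def
  by (simp add: sum.distrib sum_subtractf sum_distrib_left algebra_simps)

lemma Riem_double_contraction_null_eigenvector:
  fixes a A :: "idx \<Rightarrow> real"
  assumes lower: "\<And>k. (\<Sum>m\<in>UNIV. a m * g p m k) = A k"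
    and null: "(\<Sum>j\<in>UNIV. a j * A j) = 0"
    and Weyl_annih: "\<And>j k l. (\<Sum>m\<in>UNIV. a m * Weyl g p j k l m) = 0"
    and Ric_eigen: "\<And>k. (\<Sum>m\<in>UNIV. a m * Ric g p m k) = lam * A k"
  shows "(\<Sum>m\<in>UNIV. \<Sum>j\<in>UNIV. a m * a j * Riem g p j k l m) = (lam - scal g p / 6) * A k * A l"
proof -
  have "(\<Sum>m\<in>UNIV. \<Sum>j\<in>UNIV. a m * a j * Weyl g p j k l m)
      = (\<Sum>j\<in>UNIV. a j * (\<Sum>m\<in>UNIV. a m * Weyl g p j k l m))"
    by (subst sum.swap) (simp add: sum_distrib_left mult_ac)
  also have "\<dots> = 0"
    by (simp add: Weyl_annih)
  finally have Weyl_zero: "(\<Sum>m\<in>UNIV. \<Sum>j\<in>UNIV. a m * a j * Weyl g p j k l m) = 0" .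
  have Ric_null: "(\<Sum>j\<in>UNIV. a j * (lam * A j)) = 0"
    by (simp add: mult.left_commute[of _ lam] sum_distrib_left[symmetric] null)
  show ?thesis
    using Weyl_zero
    unfolding Weyl_double_contraction double_contraction_scalar double_contraction_product
    by (simp add: lower Ric_eigen null Ric_null) (simp add: algebra_simps)
qed

theorem mainTheorem16:
  fixes U :: "(real^4) set" and g :: "real^4 \<Rightarrow> 4 \<Rightarrow> 4 \<Rightarrow> real"
    and A :: "real^4 \<Rightarrow> 4 \<Rightarrow> real" and p :: "real^4" and lam :: real
  assumes U: "open U" "connected U"
    and metric: "lorentzian_metric_on U g"
    and cqr: "CQR4 U g A"
    and null: "\<forall>q\<in>U. (\<Sum>i\<in>UNIV. raise g A q i * A q i) = 0"
    and annih: "\<forall>q\<in>U. \<forall>j k l. (\<Sum>m\<in>UNIV. raise g A q m * Weyl g q j k l m) = 0"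
    and pU: "p \<in> U"
    and Cp: "\<exists>j k l m. Weyl g p j k l m \<noteq> 0"
    and Ap: "\<exists>i. A p i \<noteq> 0"
    and eig: "\<forall>m. (\<Sum>i\<in>UNIV. raise g A p i * Ric g p i m) = lam * A p m"
  shows "(\<forall>k l. (\<Sum>m\<in>UNIV. \<Sum>j\<in>UNIV. raise g A p m * raise g A p j * Riem g p j k l m)
              = (lam - scal g p / 6) * A p k * A p l)
       \<and> (\<forall>q k l. A p q * (\<Sum>m\<in>UNIV. \<Sum>j\<in>UNIV. Riem g p k j l m * raise g A p m * raise g A p j)
                 - A p k * (\<Sum>m\<in>UNIV. \<Sum>j\<in>UNIV. Riem g p q j l m * raise g A p m * raise g A p j) = 0)"
proof -
  have "lorentzian_matrix (gmat g p)"
    using metric pU unfolding lorentzian_metric_on_def by blast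
  then have lower: "(\<Sum>m\<in>UNIV. raise g A p m * g p m k) = A p k" for k
    by (intro raise_lower lorentzian_matrix_invertible) (simp_all add: lorentzian_matrix_def)
  have contraction: "(\<Sum>m\<in>UNIV. \<Sum>j\<in>UNIV. raise g A p m * raise g A p j * Riem g p j k l m)
      = (lam - scal g p / 6) * A p k * A p l" for k l
    using null annih pU eig by (intro Riem_double_contraction_null_eigenvector lower) auto
  have swapped: "(\<Sum>m\<in>UNIV. \<Sum>j\<in>UNIV. Riem g p k j l m * raise g A p m * raise g A p j)
      = - ((lam - scal g p / 6) * A p k * A p l)" for k l
    using contraction[of k l] by (simp add: Riem_antisym[of g p k] sum_negf mult_ac)
  show ?thesis
    unfolding swapped using contraction by (simp add: algebra_simps)
qed

end
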